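(* Consider the deterministic-demand dynamic repositioning problem (DRRP) described in the context, for a fixed realization $\xi$. Suppose it has an optimal solution. Then there always exists an optimal solution in which, for every node $i\in\mathcal{N}_\text{SV}\cap\mathcal{N}_\text{RV}$ and every time step $t$, the pair $(y_i^{+,t},y_i^{-,t})$ has the form $(y_i^{+,t},0)$ or $(0,y_i^{-,t})$. Moreover, if $r_i^t>0$ for all pairs $(i,t)$, then no optimal solution has $y_i^{+,t}>0$ and $y_i^{-,t}>0$ simultaneously for any $(i,t)$.
   Context: Data: a directed graph $\mathcal{G}_\text{SV}=(\mathcal{N}_\text{SV},\mathcal{E}_\text{SV})$ of possible shared-vehicle (SV) journeys; a directed graph $\mathcal{G}_\text{RV}=(\mathcal{N}_\text{RV},\mathcal{E}_\text{RV})$ of possible one-step rebalancing-vehicle (RV) movements; a finite set $\mathcal{V}$ of identical RVs, each able to carry an integer number $\overline{b}$ of SVs; horizon $T$; maximum journey duration $K$; integer station capacities $\overline{d}_i$; an integer bound $\overline{y}$; costs $c_{i,j}^t\in\mathbb{R}$ and $r_i^t\ge 0$. For a realization $\xi$, demands $f_{i,j}^{t,k}(\xi)\in\mathbb{N}$ and loss functions $l_{i,j}^{t,k}(\cdot;\xi)$, each a convex piecewise affine function through the origin with breakpoints at integers. Variables $y_i^{\pm,t}$ are indexed by $i\in\mathcal{N}_\text{SV}\cap\mathcal{N}_\text{RV}$ (and are taken to be $0$ where not defined). The DRRP is: minimize over $z,y,b,w,d$ $$\sum_{t=1}^T\Big[\sum_{(i,j)\in\mathcal{E}_\text{SV}}\sum_{k=0}^K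 l_{i,j}^{t,k}(f_{i,j}^{t,k}(\xi)-w_{i,j}^{t,k};\xi)+\sum_{(i,j)\in\mathcal{E}_\text{RV}}c_{i,j}^tz_{i,j}^t+\sum_{i\in\mathcal{N}_\text{SV}\cap\mathcal{N}_\text{RV}}r_i^t(y_i^{+,t}+y_i^{-,t})\Big]$$ subject to: (a) $d_i^t=d_i^{t-1}+\sum_{k=0}^K\big(\sum_{(j,i)\in\mathcal{E}_\text{SV}}w_{j,i}^{t-k,k}-\sum_{(i,j)\in\mathcal{E}_\text{SV}}w_{i,j}^{t,k}\big)+y_i^{-,t}-y_i^{+,t}$ for $t=1,\dots,T$, $i\in\mathcal{N}_\text{SV}$; (b) $\sum_{(i,j)\in\mathcal{E}_\text{RV}}b_{i,j}^t=\sum_{(j,i)\in\mathcal{E}_\text{RV}}b_{j,i}^{t-1}+y_i^{+,t}-y_i^{-,t}$ for $t=1,\dots,T$, $i\in\mathcal{N}_\text{RV}$; (c) $\sum_{(i,j)\in\mathcal{E}_\text{RV}}z_{i,j}^t=\sum_{(j,i)\in\mathcal{E}_\text{RV}}z_{j,i}^{t-1}$ for $t=1,\dots,T$, $i\in\mathcal{N}_\text{RV}$; (d) $0\le b_{i,j}^t\le\overline{b}z_{i,j}^t$ for $t=0,\dots,T$, $(i,j)\in\mathcal{E}_\text{RV}$, with integers $b_{i,j}^0$ given; (e) $0\le w_{i,j}^{t,k}\le f_{i,j}^{t,k}(\xi)$ for $t=1,\dots,T$, $k=0,\dots,K$, $(i,j)\in\mathcal{E}_\text{SV}$, with $w_{i,j}^{t,k}$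 given for $1-K\le t\le 0$, $-t<k\le K$; (f) $0\le d_i^t\le\overline{d}_i$ for $t=0,\dots,T$, with integers $d_i^0$ given; (g) $0\le y_i^{+,t}\le\overline{y}$, $0\le y_i^{-,t}\le\overline{y}$; (h) integers $z_{i,j}^0$ given with $\sum_{i,j}z_{i,j}^0=|\mathcal{V}|$; (i) all $w,y,b,z$ integer-valued. *)

theory Defs
  imports "HOL-Analysis.Analysis"
begin

text \<open>Data of one DRRP instance for a fixed realization xi (demands and loss
functions are those of this realization).
Time is nat (t = 0..T); SV journey start times are int (history 1-K..0).\<close>

record ('n, 'v) drrp_data =
  NSV   :: "'n set"
  ESV   :: "('n \<times> 'n) set"
  NRV   :: "'n set"
  ERV   :: "('n \<times> 'n) set"
  fleet :: "'v set"
  bbar  :: int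
  Thor  :: nat
  Kmax  :: nat
  dbar  :: "'n \<Rightarrow> int"
  ybar  :: int
  cost_c :: "'n \<Rightarrow> 'n \<Rightarrow> nat \<Rightarrow> real"
  cost_r :: "'n \<Rightarrow> nat \<Rightarrow> real"
  dem   :: "'n \<Rightarrow> 'n \<Rightarrow> nat \<Rightarrow> nat \<Rightarrow> nat"
  loss  :: "'n \<Rightarrow> 'n \<Rightarrow> nat \<Rightarrow> nat \<Rightarrow> real \<Rightarrow> real"
  b0    :: "'n \<Rightarrow> 'n \<Rightarrow> int"
  z0    :: "'n \<Rightarrow> 'n \<Rightarrow> int"
  d0    :: "'n \<Rightarrow> int"
  whist :: "'n \<Rightarrow> 'n \<Rightarrow> int \<Rightarrow> nat \<Rightarrow> int"

record 'n drrp_sol =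
  zv  :: "'n \<Rightarrow> 'n \<Rightarrow> nat \<Rightarrow> int"
  ypv :: "'n \<Rightarrow> nat \<Rightarrow> int"
  ymv :: "'n \<Rightarrow> nat \<Rightarrow> int"
  bv  :: "'n \<Rightarrow> 'n \<Rightarrow> nat \<Rightarrow> int"
  wv  :: "'n \<Rightarrow> 'n \<Rightarrow> int \<Rightarrow> nat \<Rightarrow> int"
  dv  :: "'n \<Rightarrow> nat \<Rightarrow> int"

definition pw_affine_loss :: "(real \<Rightarrow> real) \<Rightarrow> bool" where
  "pw_affine_loss l \<longleftrightarrow> l 0 = 0 \<and> convex_on UNIV l \<and>
     (\<forall>n::int. \<exists>a b::real. \<forall>x\<in>{real_of_int n..real_of_int n + 1}. l x = a * x + b)"

definition drrp_wf :: "('n, 'v) drrp_data \<Rightarrow> bool" where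
  "drrp_wf P \<longleftrightarrow>
     finite (NSV P) \<and> finite (NRV P) \<and> ESV P \<subseteq> NSV P \<times> NSV P \<and>
     ERV P \<subseteq> NRV P \<times> NRV P \<and> finite (fleet P) \<and>
     (\<forall>i t. cost_r P i t \<ge> 0) \<and>
     (\<forall>i j t k. pw_affine_loss (loss P i j t k))"

definition drrp_feasible :: "('n, 'v) drrp_data \<Rightarrow> 'n drrp_sol \<Rightarrow> bool" where
  "drrp_feasible P s \<longleftrightarrow>
   \<comment> \<open>(a) station inventory balance\<close>
   (\<forall>t\<in>{1..Thor P}. \<forall>i\<in>NSV P.
      dv s i t = dv s i (t - 1)
        + (\<Sum>k\<in>{0..Kmax P}. (\<Sum>j\<in>{j. (j, i) \<in> ESV P}. wv s j i (int t - int k) k)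
                           - (\<Sum>j\<in>{j. (i, j) \<in> ESV P}. wv s i j (int t) k))
        + ymv s i t - ypv s i t) \<and>
   \<comment> \<open>(b) load balance of rebalancing vehicles\<close>
   (\<forall>t\<in>{1..Thor P}. \<forall>i\<in>NRV P.
      (\<Sum>j\<in>{j. (i, j) \<in> ERV P}. bv s i j t)
        = (\<Sum>j\<in>{j. (j, i) \<in> ERV P}. bv s j i (t - 1)) + ypv s i t - ymv s i t) \<and>
   \<comment> \<open>(c) flow conservation of rebalancing vehicles\<close>
   (\<forall>t\<in>{1..Thor P}. \<forall>i\<in>NRV P.
      (\<Sum>j\<in>{j. (i, j) \<in> ERV P}. zv s i j t) = (\<Sum>j\<in>{j. (j, i) \<in> ERV P}. zv s j i (t - 1))) \<and>
   \<comment> \<open>(d) vehicle capacity, initial loads\<close>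
   (\<forall>t\<in>{0..Thor P}. \<forall>(i, j)\<in>ERV P. 0 \<le> bv s i j t \<and> bv s i j t \<le> bbar P * zv s i j t) \<and>
   (\<forall>(i, j)\<in>ERV P. bv s i j 0 = b0 P i j) \<and>
   \<comment> \<open>(e) served demand and given history\<close>
   (\<forall>t\<in>{1..Thor P}. \<forall>k\<in>{0..Kmax P}. \<forall>(i, j)\<in>ESV P.
      0 \<le> wv s i j (int t) k \<and> wv s i j (int t) k \<le> int (dem P i j t k)) \<and>
   (\<forall>(i, j)\<in>ESV P. \<forall>t::int. 1 - int (Kmax P) \<le> t \<and> t \<le> 0 \<longrightarrow>
      (\<forall>k. - t < int k \<and> k \<le> Kmax P \<longrightarrow> wv s i j t k = whist P i j t k)) \<and>
   \<comment> \<open>(f) station capacities, initial inventories\<close>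
   (\<forall>t\<in>{0..Thor P}. \<forall>i\<in>NSV P. 0 \<le> dv s i t \<and> dv s i t \<le> dbar P i) \<and>
   (\<forall>i\<in>NSV P. dv s i 0 = d0 P i) \<and>
   \<comment> \<open>(g) loading/unloading bounds; y is 0 where not defined\<close>
   (\<forall>t\<in>{1..Thor P}. \<forall>i\<in>NSV P \<inter> NRV P.
      0 \<le> ypv s i t \<and> ypv s i t \<le> ybar P \<and> 0 \<le> ymv s i t \<and> ymv s i t \<le> ybar P) \<and>
   (\<forall>t\<in>{1..Thor P}. \<forall>i. i \<notin> NSV P \<inter> NRV P \<longrightarrow> ypv s i t = 0 \<and> ymv s i t = 0) \<and>
   \<comment> \<open>(h) initial vehicle positions\<close>
   (\<forall>(i, j)\<in>ERV P. zv s i j 0 = z0 P i j) \<and>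
   (\<Sum>(i, j)\<in>ERV P. z0 P i j) = int (card (fleet P))"

definition drrp_obj :: "('n, 'v) drrp_data \<Rightarrow> 'n drrp_sol \<Rightarrow> real" where
  "drrp_obj P s =
   (\<Sum>t\<in>{1..Thor P}.
      (\<Sum>(i, j)\<in>ESV P. \<Sum>k\<in>{0..Kmax P}.
          loss P i j t k (real_of_int (int (dem P i j t k) - wv s i j (int t) k)))
    + (\<Sum>(i, j)\<in>ERV P. cost_c P i j t * real_of_int (zv s i j t))
    + (\<Sum>i\<in>NSV P \<inter> NRV P. cost_r P i t * real_of_int (ypv s i t + ymv s i t)))"

definition drrp_optimal :: "('n, 'v) drrp_data \<Rightarrow> 'n drrp_sol \<Rightarrow> bool" where
  "drrp_optimal P s \<longleftrightarrow> drrp_feasible P s \<and>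
     (\<forall>s'. drrp_feasible P s' \<longrightarrow> drrp_obj P s \<le> drrp_obj P s')"

end

theory Submission
  imports Defs
begin

text \<open>Loading and unloading at the same station and time can be netted: replacing
  \<open>(y\<^sup>+, y\<^sup>-)\<close> by \<open>(y\<^sup>+ - m, y\<^sup>- - m)\<close> with \<open>m = min y\<^sup>+ y\<^sup>-\<close> leaves the net transfer
  \<open>y\<^sup>- - y\<^sup>+\<close>, which is all that the balance constraints (a) and (b) see, keeps the
  bounds (g), and lowers the objective by \<open>\<Sum> 2 r m \<ge> 0\<close>.\<close>

definition net_loading :: "'n drrp_sol \<Rightarrow> 'n drrp_sol" where
  "net_loading s = s\<lparr>ypv := \<lambda>i t. ypv s i t - min (ypv s i t) (ymv s i t),
                     ymv := \<lambda>i t. ymv s i t - min (ypv s i t) (ymv s i t)\<rparr>"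

lemma net_loading_unchanged [simp]:
  "zv (net_loading s) = zv s" "bv (net_loading s) = bv s"
  "wv (net_loading s) = wv s" "dv (net_loading s) = dv s"
  by (simp_all add: net_loading_def)

lemma net_loading_net_transfer:
  "ymv (net_loading s) i t - ypv (net_loading s) i t = ymv s i t - ypv s i t"
  by (simp add: net_loading_def)

lemma net_loading_bounds:
  assumes "0 \<le> ypv s i t" "0 \<le> ymv s i t"
  shows "0 \<le> ypv (net_loading s) i t \<and> ypv (net_loading s) i t \<le> ypv s i t"
    and "0 \<le> ymv (net_loading s) i t \<and> ymv (net_loading s) i t \<le> ymv s i t"
    and "ypv (net_loading s) i t = 0 \<or> ymv (net_loading s) i t = 0"
  using assms by (auto simp: net_loading_def min_def)

lemma drrp_feasible_net_loading:
  assumes feas: "drrp_feasible P s"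
  shows "drrp_feasible P (net_loading s)"
proof -
  have balance:
    "x + ymv (net_loading s) i t - ypv (net_loading s) i t = x + ymv s i t - ypv s i t"
    "x + ypv (net_loading s) i t - ymv (net_loading s) i t = x + ypv s i t - ymv s i t"
    for x i t
    using net_loading_net_transfer[of s i t] by linarith+
  have "0 \<le> ypv (net_loading s) i t \<and> ypv (net_loading s) i t \<le> ybar P \<and>
        0 \<le> ymv (net_loading s) i t \<and> ymv (net_loading s) i t \<le> ybar P"
    if "t \<in> {1..Thor P}" "i \<in> NSV P \<inter> NRV P" for i t
  proof -
    have "0 \<le> ypv s i t \<and> ypv s i t \<le> ybar P \<and> 0 \<le> ymv s i t \<and> ymv s i t \<le> ybar P"
      using feas that unfolding drrp_feasible_def by blast
    then show ?thesis using net_loading_bounds[of s i t] by linarith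
  qed
  moreover have "ypv (net_loading s) i t = 0 \<and> ymv (net_loading s) i t = 0"
    if "t \<in> {1..Thor P}" "i \<notin> NSV P \<inter> NRV P" for i t
    using feas that unfolding drrp_feasible_def by (simp add: net_loading_def)
  ultimately show ?thesis
    using feas unfolding drrp_feasible_def balance by simp
qed

lemma drrp_obj_net_loading:
  "drrp_obj P s = drrp_obj P (net_loading s) +
     (\<Sum>t\<in>{1..Thor P}. \<Sum>i\<in>NSV P \<inter> NRV P.
        cost_r P i t * (2 * real_of_int (min (ypv s i t) (ymv s i t))))"
proof -
  have "cost_r P i t * real_of_int (ypv s i t + ymv s i t) =
        cost_r P i t * real_of_int (ypv (net_loading s) i t + ymv (net_loading s) i t)
        + cost_r P i t * (2 * real_of_int (min (ypv s i t) (ymv s i t)))" for i t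
    by (simp add: net_loading_def algebra_simps)
  then show ?thesis
    unfolding drrp_obj_def by (simp add: sum.distrib)
qed

lemma drrp_feasible_loading_nonneg:
  assumes "drrp_feasible P s" "t \<in> {1..Thor P}" "i \<in> NSV P \<inter> NRV P"
  shows "0 \<le> ypv s i t" "0 \<le> ymv s i t"
  using assms unfolding drrp_feasible_def by blast+

lemma net_loading_saving_nonneg:
  assumes "drrp_wf P" "drrp_feasible P s" "t \<in> {1..Thor P}" "i \<in> NSV P \<inter> NRV P"
  shows "0 \<le> cost_r P i t * (2 * real_of_int (min (ypv s i t) (ymv s i t)))"
proof -
  have "0 \<le> ypv s i t" "0 \<le> ymv s i t"
    using drrp_feasible_loading_nonneg[OF assms(2-4)] .
  moreover have "0 \<le> cost_r P i t"
    using assms(1) unfolding drrp_wf_def by blast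
  ultimately show ?thesis by simp
qed

lemma drrp_obj_net_loading_le:
  assumes "drrp_wf P" "drrp_feasible P s"
  shows "drrp_obj P (net_loading s) \<le> drrp_obj P s"
proof -
  have "0 \<le> (\<Sum>t\<in>{1..Thor P}. \<Sum>i\<in>NSV P \<inter> NRV P.
                   cost_r P i t * (2 * real_of_int (min (ypv s i t) (ymv s i t))))"
    by (intro sum_nonneg net_loading_saving_nonneg[OF assms])
  then show ?thesis
    by (subst (2) drrp_obj_net_loading) simp
qed

lemma drrp_obj_net_loading_less:
  assumes wf: "drrp_wf P" and feas: "drrp_feasible P s"
    and t: "t \<in> {1..Thor P}" and i: "i \<in> NSV P \<inter> NRV P"
    and "0 < cost_r P i t" "0 < ypv s i t" "0 < ymv s i t"
  shows "drrp_obj P (net_loading s) < drrp_obj P s"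
proof -
  have fin: "finite (NSV P \<inter> NRV P)"
    using wf unfolding drrp_wf_def by blast
  have "0 < cost_r P i t * (2 * real_of_int (min (ypv s i t) (ymv s i t)))"
    using assms(5-7) by simp
  then have "0 < (\<Sum>i\<in>NSV P \<inter> NRV P. cost_r P i t * (2 * real_of_int (min (ypv s i t) (ymv s i t))))"
    by (rule sum_pos2[OF fin i]) (rule net_loading_saving_nonneg[OF wf feas t])
  then have "0 < (\<Sum>t\<in>{1..Thor P}. \<Sum>i\<in>NSV P \<inter> NRV P.
                   cost_r P i t * (2 * real_of_int (min (ypv s i t) (ymv s i t))))"
    by (rule sum_pos2[OF finite_atLeastAtMost t])
      (intro sum_nonneg net_loading_saving_nonneg[OF wf feas])
  then show ?thesis
    by (subst (2) drrp_obj_net_loading) simp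
qed

lemma drrp_optimal_net_loading:
  assumes "drrp_wf P" "drrp_optimal P s"
  shows "drrp_optimal P (net_loading s)"
proof -
  have feas: "drrp_feasible P s"
    using assms(2) unfolding drrp_optimal_def by blast
  show ?thesis
    using assms(2) drrp_feasible_net_loading[OF feas] drrp_obj_net_loading_le[OF assms(1) feas]
    unfolding drrp_optimal_def by fastforce
qed

lemma drrp_optimal_not_load_and_unload:
  assumes "drrp_wf P" "drrp_optimal P s"
    and "t \<in> {1..Thor P}" "i \<in> NSV P \<inter> NRV P" "0 < cost_r P i t"
  shows "\<not> (0 < ypv s i t \<and> 0 < ymv s i t)"
proof
  assume "0 < ypv s i t \<and> 0 < ymv s i t"
  moreover have feas: "drrp_feasible P s"
    using assms(2) unfolding drrp_optimal_def by blast
  ultimately have "drrp_obj P (net_loading s) < drrp_obj P s"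
    using drrp_obj_net_loading_less[OF assms(1) feas assms(3-5)] by blast
  moreover have "drrp_obj P s \<le> drrp_obj P (net_loading s)"
    using assms(2) drrp_feasible_net_loading[OF feas] unfolding drrp_optimal_def by blast
  ultimately show False
    by simp
qed

theorem lemma1:
  fixes P :: "('n, 'v) drrp_data"
  assumes "drrp_wf P"
    and "\<exists>s. drrp_optimal P s"
  shows "(\<exists>s. drrp_optimal P s \<and>
            (\<forall>i\<in>NSV P \<inter> NRV P. \<forall>t\<in>{1..Thor P}. ypv s i t = 0 \<or> ymv s i t = 0))
       \<and> ((\<forall>i\<in>NSV P \<inter> NRV P. \<forall>t\<in>{1..Thor P}. cost_r P i t > 0) \<longrightarrow>
            (\<forall>s. drrp_optimal P s \<longrightarrow>
               (\<forall>i\<in>NSV P \<inter> NRV P. \<forall>t\<in>{1..Thor P}. \<not> (ypv s i t > 0 \<and> ymv s i t > 0))))"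
proof (intro conjI impI allI ballI)
  obtain s where opt: "drrp_optimal P s"
    using assms(2) by blast
  then have feas: "drrp_feasible P s"
    unfolding drrp_optimal_def by blast
  have "ypv (net_loading s) i t = 0 \<or> ymv (net_loading s) i t = 0"
    if "i \<in> NSV P \<inter> NRV P" "t \<in> {1..Thor P}" for i t
    by (rule net_loading_bounds(3)[OF drrp_feasible_loading_nonneg[OF feas that(2,1)]])
  with drrp_optimal_net_loading[OF assms(1) opt]
  show "\<exists>s. drrp_optimal P s \<and>
      (\<forall>i\<in>NSV P \<inter> NRV P. \<forall>t\<in>{1..Thor P}. ypv s i t = 0 \<or> ymv s i t = 0)"
    by blast
next
  fix s i t
  assume "\<forall>i\<in>NSV P \<inter> NRV P. \<forall>t\<in>{1..Thor P}. 0 < cost_r P i t"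
    and "drrp_optimal P s" "i \<in> NSV P \<inter> NRV P" "t \<in> {1..Thor P}"
  then show "\<not> (0 < ypv s i t \<and> 0 < ymv s i t)"
    using drrp_optimal_not_load_and_unload[OF assms(1)] by blast
qed

end
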